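(* For all integers $N\ge2$ and real $0<\theta<2\pi$, $$\prod_{j=1}^N\big|e^{ij\theta/N}-1\big|^{-1}<\frac{2N}{\theta\sin(\theta/2)}\exp\Big(N\frac{\mathrm{Cl}_2(\theta)}{\theta}\Big).$$
   Context: $\mathrm{Cl}_2(\theta):=\sum_{k\ge1}k^{-2}\sin(k\theta)$ is the Clausen function. *)

theory Defs
  imports "HOL-Analysis.Analysis"
begin

definition clausen2 :: "real \<Rightarrow> real" where
  "clausen2 \<theta> = (\<Sum>k. sin (real (Suc k) * \<theta>) / (real (Suc k))^2)"

end

theory Submission
  imports Defs "HOL-Real_Asymp.Real_Asymp"
begin

text \<open>Write h = \<theta>/N. The logarithm of the product is the Riemann sum \<Sum>_{j=1}^N Cl_1(jh) of
  Cl_1(t) = -ln(2 sin(t/2)), which is the derivative of Cl_2 on (0, 2\<pi>) and is convex there.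
  By convexity h Cl_1(jh) is at most the integral of Cl_1 over [jh - h/2, jh + h/2], so the terms
  j < N add up to at most Cl_2(\<theta> - h/2) - Cl_2(h/2). The two end pieces are controlled by
  Cl_1 \<ge> -ln 2 and Cl_1(t) \<ge> -ln t, which gives Cl_2(h/2) \<ge> (h/2)(1 - ln(h/2)); the remaining
  constant is absorbed using h < \<pi> and \<pi>^3 < 32.\<close>

lemma summable_inverse_Suc_power2: "summable (\<lambda>k. 1 / real (Suc k) ^ 2)"
proof -
  have "summable (\<lambda>n. inverse (real n ^ 2))"
    by (rule inverse_power_summable) simp
  then show ?thesis
    by (subst (asm) summable_Suc_iff[symmetric]) (simp add: divide_inverse)
qed

lemma continuous_on_suminf_div_Suc_power2:
  fixes f :: "nat \<Rightarrow> real \<Rightarrow> real"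
  assumes "\<And>n. continuous_on S (f n)" and "\<And>n x. x \<in> S \<Longrightarrow> \<bar>f n x\<bar> \<le> 1"
  shows "continuous_on S (\<lambda>x. \<Sum>n. f n x / real (Suc n) ^ 2)"
proof -
  have "uniform_limit S (\<lambda>n x. \<Sum>i<n. f i x / real (Suc i) ^ 2)
          (\<lambda>x. \<Sum>i. f i x / real (Suc i) ^ 2) sequentially"
    by (rule Weierstrass_m_test[OF _ summable_inverse_Suc_power2])
       (simp add: assms(2) divide_right_mono)
  then show ?thesis
    by (rule uniform_limit_theorem[rotated])
       (auto intro!: always_eventually continuous_intros assms(1))
qed

lemma has_real_derivative_uniform_limit:
  fixes f f' :: "nat \<Rightarrow> real \<Rightarrow> real"
  assumes "open S" "convex S" "x \<in> S"
    and "\<And>n y. y \<in> S \<Longrightarrow> (f n has_real_derivative f' n y) (at y)"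
    and "uniform_limit S f' g' sequentially"
    and "\<And>y. y \<in> S \<Longrightarrow> (\<lambda>n. f n y) \<longlonglongrightarrow> g y"
  shows "(g has_real_derivative g' x) (at x)"
proof -
  have deriv: "(f n has_derivative (\<lambda>h. f' n y * h)) (at y within S)" if "y \<in> S" for n y
    using assms(4)[OF that] by (auto simp: has_field_derivative_def intro: has_derivative_at_withinI)
  have deriv_unif: "\<forall>\<^sub>F n in sequentially. \<forall>y\<in>S. \<forall>h. norm (f' n y * h - g' y * h) \<le> e * norm h"
    if "0 < e" for e
    using uniform_limitD[OF assms(5) that]
    by eventually_elim (auto simp: dist_real_def abs_mult mult_right_mono simp flip: left_diff_distrib)
  from has_derivative_sequence[OF assms(2) deriv deriv_unif assms(3) assms(6)[OF assms(3)]]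
  obtain G where G: "\<And>y. y \<in> S \<Longrightarrow> (\<lambda>n. f n y) \<longlonglongrightarrow> G y
      \<and> (G has_derivative (\<lambda>h. g' y * h)) (at y within S)"
    by blast
  have "(G has_real_derivative g' x) (at x)"
    using G[OF assms(3)] at_within_open[OF assms(3,1)] by (simp add: has_field_derivative_def)
  moreover have "G y = g y" if "y \<in> S" for y
    using G[OF that] assms(6)[OF that] LIMSEQ_unique by blast
  ultimately show ?thesis
    using has_field_derivative_transform_within_open[OF _ assms(1,3)] by blast
qed

lemma abs_ln_diff_le:
  fixes a b c :: real
  assumes "0 < c" "c \<le> a" "c \<le> b"
  shows "\<bar>ln a - ln b\<bar> \<le> \<bar>a - b\<bar> / c"
proof -
  have one_side: "ln x - ln y \<le> \<bar>a - b\<bar> / c" if "{x, y} = {a, b}" for x y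
  proof -
    have xy: "c \<le> x" "c \<le> y" "\<bar>x - y\<bar> = \<bar>a - b\<bar>"
      using that assms by (auto simp: doubleton_eq_iff)
    have "ln x - ln y = ln (x / y)"
      using xy assms by (simp add: ln_div)
    also have "\<dots> \<le> (x - y) / y"
      using ln_le_minus_one[of "x / y"] xy assms by (simp add: diff_divide_distrib)
    also have "\<dots> \<le> \<bar>x - y\<bar> / c"
      using xy assms by (simp add: frac_le)
    finally show ?thesis
      using xy by simp
  qed
  show ?thesis
    using one_side[of a b] one_side[of b a] by (auto simp: insert_commute)
qed

lemma sin_half_pos: "0 < t \<Longrightarrow> t < 2 * pi \<Longrightarrow> 0 < sin (t / 2)"
  by (intro sin_gt_zero) auto

lemma cos_le_cos_margin:
  assumes "0 \<le> d" "d \<le> t" "t \<le> 2 * pi - d"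
  shows "cos t \<le> cos d"
proof (cases "t \<le> pi")
  case True
  then show ?thesis
    using assms by (intro cos_monotone_0_pi_le) auto
next
  case False
  then have "cos (2 * pi - t) \<le> cos d"
    using assms by (intro cos_monotone_0_pi_le) auto
  then show ?thesis
    by simp
qed

lemma sin_half_product_le:
  fixes x u :: real
  shows "sin ((x + u) / 2) * sin ((x - u) / 2) \<le> sin (x / 2) ^ 2"
proof -
  have "(x + u) / 2 - (x - u) / 2 = u" "(x + u) / 2 + (x - u) / 2 = x"
    by (simp_all add: field_simps)
  then have "sin ((x + u) / 2) * sin ((x - u) / 2) = (cos u - cos x) / 2"
    by (simp only: sin_times_sin)
  also have "\<dots> \<le> (1 - cos x) / 2"
    by simp
  also have "\<dots> = sin (x / 2) ^ 2"
    using cos_double_sin[of "x / 2"] by simp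
  finally show ?thesis .
qed

lemma three_ln_less_five_ln2:
  assumes "0 < h" "h < pi"
  shows "3 * ln h < 5 * ln 2"
proof -
  have "pi < 3.1416"
    using pi_approx by simp
  then have "h ^ 3 < 3.1416 ^ 3"
    using assms by (intro power_strict_mono) auto
  also have "\<dots> < 32"
    by (simp add: power_divide)
  finally have "h ^ 3 < 32" .
  have "3 * ln h = ln (h ^ 3)"
    using assms(1) by (simp add: ln_realpow)
  also have "\<dots> < ln 32"
    using \<open>h ^ 3 < 32\<close> assms(1) by simp
  also have "ln 32 = 5 * ln (2 :: real)"
    using ln_realpow[of 2 5] by simp
  finally show ?thesis .
qed

definition clausen2_abel :: "real \<Rightarrow> real \<Rightarrow> real" where
  "clausen2_abel r t = (\<Sum>k. r ^ Suc k * sin (real (Suc k) * t) / real (Suc k) ^ 2)"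

text \<open>On (0, 2\<pi>) this is the conditionally convergent Clausen series Cl_1(t) = \<Sum>k\<ge>1. cos(kt)/k.\<close>

definition clausen1 :: "real \<Rightarrow> real" where
  "clausen1 t = - ln (2 * sin (t / 2))"

definition clausen1_abel :: "real \<Rightarrow> real \<Rightarrow> real" where
  "clausen1_abel r t = - ln (cmod (1 - complex_of_real r * exp (\<i> * complex_of_real t)))"

lemma continuous_clausen2: "continuous_on UNIV clausen2"
  unfolding clausen2_def[abs_def]
  by (rule continuous_on_suminf_div_Suc_power2) (auto intro!: continuous_intros)

lemma continuous_on_clausen2_abel: "continuous_on {0..1} (\<lambda>r. clausen2_abel r t)"
  unfolding clausen2_abel_def
  by (rule continuous_on_suminf_div_Suc_power2)
     (auto simp: abs_mult intro!: continuous_intros mult_le_one power_le_one)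

lemma clausen2_abel_one: "clausen2_abel 1 t = clausen2 t"
  by (simp add: clausen2_abel_def clausen2_def)

lemma clausen1_abel_sums:
  assumes "0 \<le> r" "r < 1"
  shows "(\<lambda>k. r ^ Suc k * cos (real (Suc k) * t) / real (Suc k)) sums clausen1_abel r t"
proof -
  define w where "w = complex_of_real r * exp (\<i> * complex_of_real t)"
  have norm_w: "cmod w = r"
    using assms by (simp add: w_def norm_mult)
  have "(\<lambda>n. - (w ^ n) / of_nat n) sums ln (1 - w)"
    using Ln_series'[of "- w"] norm_w assms by simp
  then have "(\<lambda>k. - (w ^ Suc k) / of_nat (Suc k)) sums ln (1 - w)"
    by (subst sums_Suc_iff) simp
  then have "(\<lambda>k. w ^ Suc k / of_nat (Suc k)) sums - ln (1 - w)"
    using sums_minus by fastforce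
  then have "(\<lambda>k. Re (w ^ Suc k / of_nat (Suc k))) sums Re (- ln (1 - w))"
    by (rule sums_Re)
  moreover have "Re (w ^ Suc k / of_nat (Suc k)) = r ^ Suc k * cos (real (Suc k) * t) / real (Suc k)" for k
  proof -
    have "w ^ Suc k = complex_of_real (r ^ Suc k) * exp (\<i> * complex_of_real (real (Suc k) * t))"
      unfolding w_def power_mult_distrib exp_of_nat_mult[symmetric] by (simp add: mult_ac)
    then show ?thesis
      by (simp add: Re_divide_of_nat Re_exp)
  qed
  moreover have "1 - w \<noteq> 0"
    using norm_w assms by auto
  ultimately show ?thesis
    by (simp add: clausen1_abel_def w_def)
qed

lemma has_real_derivative_clausen2_abel:
  assumes "0 \<le> r" "r < 1"
  shows "(clausen2_abel r has_real_derivative clausen1_abel r t) (at t)"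
proof -
  define f where "f k x = r ^ Suc k / real (Suc k) ^ 2 * sin (real (Suc k) * x)" for k x
  define f' where "f' k x = r ^ Suc k * cos (real (Suc k) * x) / real (Suc k)" for k x
  have deriv_terms: "(f k has_field_derivative f' k x) (at x)" for k x
    unfolding f_def f'_def by (auto intro!: derivative_eq_intros simp: power2_eq_square)
  have uniform: "uniformly_convergent_on UNIV (\<lambda>n x. \<Sum>k<n. f' k x)"
  proof (rule Weierstrass_m_test'[of _ _ "\<lambda>k. r ^ Suc k"])
    show "norm (f' k x) \<le> r ^ Suc k" for k x
    proof -
      have "\<bar>cos (real (Suc k) * x)\<bar> \<le> real (Suc k)"
        by (rule order_trans[OF abs_cos_le_one]) simp
      then have "\<bar>cos (real (Suc k) * x)\<bar> / real (Suc k) \<le> 1"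
        by (simp add: divide_le_eq)
      then have "r ^ Suc k * (\<bar>cos (real (Suc k) * x)\<bar> / real (Suc k)) \<le> r ^ Suc k"
        by (rule mult_left_le) (use assms in simp)
      then show ?thesis
        unfolding f'_def using assms by (simp add: abs_mult)
    qed
    show "summable (\<lambda>k. r ^ Suc k)"
      using assms by (simp add: summable_geometric summable_mult)
  qed
  have "((\<lambda>x. \<Sum>k. f k x) has_field_derivative (\<Sum>k. f' k t)) (at t)"
  proof (rule has_field_derivative_series'(2)[OF _ deriv_terms uniform])
    show "summable (\<lambda>k. f k 0)"
      by (simp add: f_def)
  qed auto
  moreover have "(\<lambda>x. \<Sum>k. f k x) = clausen2_abel r"
    by (simp add: fun_eq_iff f_def clausen2_abel_def)
  moreover have "(\<Sum>k. f' k t) = clausen1_abel r t"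
    using clausen1_abel_sums[OF assms] by (simp add: f'_def sums_iff)
  ultimately show ?thesis
    by simp
qed

lemma norm_one_minus_polar_squared:
  "cmod (1 - complex_of_real r * exp (\<i> * complex_of_real t)) ^ 2 = (1 - r) ^ 2 + 2 * r * (1 - cos t)"
proof -
  have "r\<^sup>2 * (cos t)\<^sup>2 + r\<^sup>2 * (sin t)\<^sup>2 = r\<^sup>2"
    by (simp flip: distrib_left)
  then show ?thesis
    by (simp add: cmod_power2 Re_exp Im_exp power_mult_distrib power2_diff algebra_simps)
qed

lemma norm_one_minus_polar_ge:
  assumes "1 / 2 \<le> r" "0 \<le> d" "d \<le> t" "t \<le> 2 * pi - d"
  shows "sqrt (1 - cos d) \<le> cmod (1 - complex_of_real r * exp (\<i> * complex_of_real t))"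
proof -
  have "1 * (1 - cos t) \<le> (2 * r) * (1 - cos t)"
    using assms(1) by (intro mult_right_mono) auto
  then have "1 - cos d \<le> 2 * r * (1 - cos t)"
    using cos_le_cos_margin[OF assms(2-4)] by simp
  also have "\<dots> \<le> cmod (1 - complex_of_real r * exp (\<i> * complex_of_real t)) ^ 2"
    unfolding norm_one_minus_polar_squared by simp
  finally show ?thesis
    by (simp add: real_le_lsqrt)
qed

lemma abs_clausen1_abel_diff_le:
  assumes "1 / 2 \<le> r" "r \<le> 1" "0 < d" "d \<le> t" "t \<le> 2 * pi - d"
  shows "\<bar>clausen1_abel r t - clausen1_abel 1 t\<bar> \<le> (1 - r) / sqrt (1 - cos d)"
proof -
  define z where "z = exp (\<i> * complex_of_real t)"
  have "0 < sin (d / 2)"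
    using assms by (intro sin_half_pos) auto
  then have "0 < sqrt (1 - cos d)"
    using cos_double_sin[of "d / 2"] by simp
  define A B where "A = cmod (1 - of_real r * z)" and "B = cmod (1 - of_real 1 * z)"
  have "\<bar>A - B\<bar> \<le> cmod (of_real (1 - r) * z)"
    using norm_triangle_ineq3[of "1 - of_real r * z" "1 - of_real 1 * z"]
    by (simp add: A_def B_def algebra_simps)
  also have "\<dots> = 1 - r"
    using assms(2) by (simp add: z_def norm_mult del: of_real_diff)
  finally have "\<bar>A - B\<bar> \<le> 1 - r" .
  moreover have "\<bar>ln A - ln B\<bar> \<le> \<bar>A - B\<bar> / sqrt (1 - cos d)"
    using assms unfolding A_def B_def z_def
    by (intro abs_ln_diff_le \<open>0 < sqrt (1 - cos d)\<close> norm_one_minus_polar_ge) auto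
  moreover have "clausen1_abel r t - clausen1_abel 1 t = ln B - ln A"
    by (simp add: clausen1_abel_def A_def B_def z_def)
  ultimately show ?thesis
    using \<open>0 < sqrt (1 - cos d)\<close> by (smt (verit) divide_right_mono)
qed

lemma clausen1_abel_one:
  assumes "0 < t" "t < 2 * pi"
  shows "clausen1_abel 1 t = clausen1 t"
  using dist_exp_i_1[of t] sin_half_pos[OF assms]
  by (simp add: clausen1_abel_def clausen1_def norm_minus_commute)

lemma uniform_limit_clausen1_abel:
  assumes "0 < d" "r \<longlonglongrightarrow> 1" "\<And>n. 1 / 2 \<le> r n" "\<And>n. r n \<le> 1"
  shows "uniform_limit {d..2 * pi - d} (\<lambda>n. clausen1_abel (r n)) (clausen1_abel 1) sequentially"
  unfolding uniform_limit_iff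
proof (intro allI impI)
  fix e :: real
  assume "0 < e"
  have "(\<lambda>n. 1 - r n) \<longlonglongrightarrow> 1 - 1"
    by (intro tendsto_intros assms(2))
  then have "(\<lambda>n. (1 - r n) / sqrt (1 - cos d)) \<longlonglongrightarrow> 0"
    by (intro tendsto_divide_zero) simp
  then show "\<forall>\<^sub>F n in sequentially. \<forall>x\<in>{d..2 * pi - d}. dist (clausen1_abel (r n) x) (clausen1_abel 1 x) < e"
  proof (rule eventually_mono[OF order_tendstoD(2)[OF _ \<open>0 < e\<close>]], intro ballI)
    fix n x
    assume "(1 - r n) / sqrt (1 - cos d) < e" "x \<in> {d..2 * pi - d}"
    then show "dist (clausen1_abel (r n) x) (clausen1_abel 1 x) < e"
      using abs_clausen1_abel_diff_le[of "r n" d x] assms(1,3,4) by (simp add: dist_real_def)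
  qed
qed

text \<open>Term-by-term differentiation of the Clausen series fails, so the derivative is obtained
  as the locally uniform limit of the derivatives of the Abel means along r \<rightarrow> 1.\<close>

lemma has_real_derivative_clausen2:
  assumes "0 < t" "t < 2 * pi"
  shows "(clausen2 has_real_derivative clausen1 t) (at t)"
proof -
  define d where "d = min t (2 * pi - t) / 2"
  define r where "r n = 1 - 1 / (real n + 2)" for n
  have d: "0 < d" "t \<in> {d<..<2 * pi - d}"
    using assms by (auto simp: d_def min_def field_simps)
  have r: "1 / 2 \<le> r n" "r n < 1" for n
    by (auto simp: r_def field_simps)
  have r_lim: "r \<longlonglongrightarrow> 1"
    unfolding r_def by real_asymp
  have "(clausen2 has_real_derivative clausen1_abel 1 t) (at t)"
  proof (rule has_real_derivative_uniform_limit[OF _ _ d(2)])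
    show "(clausen2_abel (r n) has_real_derivative clausen1_abel (r n) x) (at x)" for n x
      using has_real_derivative_clausen2_abel r[of n] by simp
    show "uniform_limit {d<..<2 * pi - d} (\<lambda>n. clausen1_abel (r n)) (clausen1_abel 1) sequentially"
      using uniform_limit_clausen1_abel[OF d(1) r_lim r(1) less_imp_le[OF r(2)]]
      by (rule uniform_limit_on_subset) auto
    show "(\<lambda>n. clausen2_abel (r n) x) \<longlonglongrightarrow> clausen2 x" for x
      using continuous_on_tendsto_compose[OF continuous_on_clausen2_abel r_lim] r
      by (simp add: clausen2_abel_one less_imp_le order_trans[OF _ r(1)])
  qed auto
  then show ?thesis
    using clausen1_abel_one[OF assms] by simp
qed

lemma has_real_derivative_clausen2_compose:
  assumes "(g has_real_derivative g') (at x)" "0 < g x" "g x < 2 * pi" "E = clausen1 (g x) * g'"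
  shows "((\<lambda>x. clausen2 (g x)) has_real_derivative E) (at x)"
  using DERIV_chain2[OF has_real_derivative_clausen2 assms(1)] assms(2-4) by simp

lemma clausen1_ge_minus_ln2:
  assumes "0 < t" "t < 2 * pi"
  shows "- ln 2 \<le> clausen1 t"
  using sin_half_pos[OF assms] by (simp add: clausen1_def)

lemma clausen1_ge_minus_ln:
  assumes "0 < t" "t < 2 * pi"
  shows "- ln t \<le> clausen1 t"
proof -
  have "2 * sin (t / 2) \<le> t"
    using sin_x_le_x[of "t / 2"] assms by simp
  then show ?thesis
    using sin_half_pos[OF assms] by (simp add: clausen1_def)
qed

lemma clausen1_midpoint_convex:
  assumes "0 \<le> u" "0 < x - u" "x + u < 2 * pi"
  shows "2 * clausen1 x \<le> clausen1 (x + u) + clausen1 (x - u)"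
proof -
  have pos: "0 < sin ((x + u) / 2)" "0 < sin ((x - u) / 2)" "0 < sin (x / 2)"
    using assms by (auto intro: sin_half_pos)
  have "ln (2 * sin ((x + u) / 2)) + ln (2 * sin ((x - u) / 2))
      = ln ((2 * sin ((x + u) / 2)) * (2 * sin ((x - u) / 2)))"
    using pos by (intro ln_mult_pos[symmetric]) auto
  also have "\<dots> \<le> ln ((2 * sin (x / 2)) * (2 * sin (x / 2)))"
    using sin_half_product_le[of x u] pos by (simp add: power2_eq_square)
  also have "\<dots> = 2 * ln (2 * sin (x / 2))"
    using pos by (subst ln_mult_pos) auto
  finally show ?thesis
    by (simp add: clausen1_def)
qed

lemma clausen2_diff_ge_midpoint:
  assumes "0 \<le> s" "0 < x - s" "x + s < 2 * pi"
  shows "2 * s * clausen1 x \<le> clausen2 (x + s) - clausen2 (x - s)"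
proof -
  define \<phi> where "\<phi> u = clausen2 (x + u) - clausen2 (x - u) - 2 * u * clausen1 x" for u
  have "\<phi> 0 \<le> \<phi> s"
  proof (rule deriv_nonneg_imp_mono[where g = \<phi>, OF _ _ assms(1)])
    fix u assume u: "u \<in> {0..s}"
    then have "0 < x - u" "x + u < 2 * pi" "0 < x + u" "x - u < 2 * pi"
      using assms by auto
    then show "(\<phi> has_real_derivative clausen1 (x + u) + clausen1 (x - u) - 2 * clausen1 x) (at u)"
      unfolding \<phi>_def
      by (auto intro!: derivative_eq_intros has_real_derivative_clausen2_compose)
    show "0 \<le> clausen1 (x + u) + clausen1 (x - u) - 2 * clausen1 x"
      using clausen1_midpoint_convex[of u x] u assms by auto
  qed
  then show ?thesis
    by (simp add: \<phi>_def)
qed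

lemma clausen2_diff_ge:
  assumes "0 \<le> s" "0 < y - s" "y < 2 * pi"
  shows "- s * ln 2 \<le> clausen2 y - clausen2 (y - s)"
proof -
  define \<phi> where "\<phi> u = clausen2 u + u * ln 2" for u
  have "\<phi> (y - s) \<le> \<phi> y"
  proof (rule deriv_nonneg_imp_mono[where g = \<phi>])
    fix u assume "u \<in> {y - s..y}"
    then have u: "0 < u" "u < 2 * pi"
      using assms by auto
    then show "(\<phi> has_real_derivative clausen1 u + ln 2) (at u)"
      unfolding \<phi>_def by (auto intro!: derivative_eq_intros has_real_derivative_clausen2_compose)
    show "0 \<le> clausen1 u + ln 2"
      using clausen1_ge_minus_ln2[OF u] by simp
  qed (use assms in simp)
  then show ?thesis
    by (simp add: \<phi>_def algebra_simps)
qed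

text \<open>Since Cl_2(0) = 0, this follows from Cl_2' = Cl_1 \<ge> -ln on (0, u] by monotonicity on
  [\<epsilon>, u] and \<epsilon> \<rightarrow> 0.\<close>

lemma clausen2_ge:
  assumes "0 < u" "u < 2 * pi"
  shows "u * (1 - ln u) \<le> clausen2 u"
proof -
  define \<psi> where "\<psi> v = clausen2 v - v + v * ln v" for v
  have mono: "\<psi> \<epsilon> \<le> \<psi> u" if "0 < \<epsilon>" "\<epsilon> \<le> u" for \<epsilon>
  proof (rule deriv_nonneg_imp_mono[where g = \<psi>, OF _ _ \<open>\<epsilon> \<le> u\<close>])
    fix v assume "v \<in> {\<epsilon>..u}"
    then have v: "0 < v" "v < 2 * pi"
      using that assms by auto
    then show "(\<psi> has_real_derivative clausen1 v + ln v) (at v)"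
      unfolding \<psi>_def by (auto intro!: derivative_eq_intros has_real_derivative_clausen2_compose)
    show "0 \<le> clausen1 v + ln v"
      using clausen1_ge_minus_ln[OF v] by simp
  qed
  have "clausen2 0 = 0"
    by (simp add: clausen2_def)
  then have "(clausen2 \<longlongrightarrow> 0) (at_right 0)"
    using continuous_clausen2 by (metis continuous_on_def filterlim_at_split UNIV_I)
  moreover have "((\<lambda>v::real. - v + v * ln v) \<longlongrightarrow> 0) (at_right 0)"
    by real_asymp
  ultimately have "(\<psi> \<longlongrightarrow> 0) (at_right 0)"
    unfolding \<psi>_def using tendsto_add by (force simp: algebra_simps)
  moreover have "eventually (\<lambda>\<epsilon>. \<psi> \<epsilon> \<le> \<psi> u) (at_right 0)"
    using mono assms by (intro eventually_at_rightI[of 0 u]) auto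
  ultimately have "0 \<le> \<psi> u"
    by (intro tendsto_upperbound) auto
  then show ?thesis
    by (simp add: \<psi>_def algebra_simps)
qed

lemma clausen1_riemann_sum_le:
  assumes "0 < h" "real M * h + h / 2 < 2 * pi"
  shows "h * (\<Sum>j=1..M. clausen1 (real j * h)) \<le> clausen2 (real M * h + h / 2) - clausen2 (h / 2)"
  using assms(2)
proof (induction M)
  case 0
  then show ?case
    by simp
next
  case (Suc M)
  have "h * clausen1 (real (Suc M) * h)
      \<le> clausen2 (real (Suc M) * h + h / 2) - clausen2 (real M * h + h / 2)"
  proof -
    have "0 < real M * h + h / 2"
      using assms(1) by (simp add: add_nonneg_pos)
    then show ?thesis
      using clausen2_diff_ge_midpoint[of "h / 2" "real (Suc M) * h"] Suc.prems assms(1)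
      by (simp add: algebra_simps)
  qed
  moreover have "h * (\<Sum>j=1..M. clausen1 (real j * h)) \<le> clausen2 (real M * h + h / 2) - clausen2 (h / 2)"
    using Suc.IH Suc.prems assms(1) by (simp add: algebra_simps)
  ultimately show ?case
    by (simp add: distrib_left)
qed

lemma sum_clausen1_le:
  assumes "1 \<le> N" "0 < h" "real N * h < 2 * pi"
  shows "(\<Sum>j=1..N. clausen1 (real j * h))
           \<le> clausen2 (real N * h) / h + (ln h - 1) / 2 + clausen1 (real N * h)"
proof -
  obtain M where N: "N = Suc M"
    using assms(1) by (cases N) auto
  have M: "real M * h + h / 2 = real N * h - h / 2"
    by (simp add: N algebra_simps)
  have "real N * h \<ge> h"
    using assms by simp
  then have "h * (\<Sum>j=1..M. clausen1 (real j * h))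
      \<le> clausen2 (real N * h - h / 2) - clausen2 (h / 2)"
    using clausen1_riemann_sum_le[of h M] assms by (simp add: M)
  moreover have "- (h / 2) * ln 2 \<le> clausen2 (real N * h) - clausen2 (real N * h - h / 2)"
    using \<open>real N * h \<ge> h\<close> assms by (intro clausen2_diff_ge) auto
  moreover have "h / 2 * (1 - ln (h / 2)) \<le> clausen2 (h / 2)"
    using \<open>real N * h \<ge> h\<close> assms by (intro clausen2_ge) linarith+
  moreover have "ln (h / 2) = ln h - ln 2"
    using assms by (simp add: ln_div)
  ultimately have "h * (\<Sum>j=1..M. clausen1 (real j * h)) \<le> clausen2 (real N * h) + h * ((ln h - 1) / 2)"
    by (simp add: algebra_simps diff_divide_distrib)
  then have "(\<Sum>j=1..M. clausen1 (real j * h)) \<le> clausen2 (real N * h) / h + (ln h - 1) / 2"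
    using assms(2) by (simp add: field_simps)
  then show ?thesis
    by (simp add: N)
qed

lemma inverse_norm_exp_i_minus_one:
  assumes "0 < x" "x < 2 * pi"
  shows "inverse (cmod (exp (\<i> * complex_of_real x) - 1)) = exp (clausen1 x)"
  using dist_exp_i_1[of x] sin_half_pos[OF assms] by (simp add: clausen1_def exp_minus)

lemma prod_inverse_norm_exp_i_minus_one:
  assumes "0 < h" "real N * h < 2 * pi"
  shows "(\<Prod>j=1..N. inverse (cmod (exp (\<i> * complex_of_real (real j * h)) - 1)))
           = exp (\<Sum>j=1..N. clausen1 (real j * h))"
  unfolding exp_sum[OF finite_atLeastAtMost]
proof (rule prod.cong[OF refl])
  fix j assume "j \<in> {1..N}"
  then have "0 < real j * h" "real j * h \<le> real N * h"
    using assms(1) by (auto intro: mult_right_mono)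
  then show "inverse (cmod (exp (\<i> * complex_of_real (real j * h)) - 1)) = exp (clausen1 (real j * h))"
    using inverse_norm_exp_i_minus_one[of "real j * h"] assms(2) by simp
qed

theorem proposition3p2:
  fixes N :: nat and \<theta> :: real
  assumes "N \<ge> 2" and "0 < \<theta>" and "\<theta> < 2 * pi"
  shows "(\<Prod>j=1..N. inverse (cmod (exp (\<i> * complex_of_real (real j * \<theta> / real N)) - 1)))
           < 2 * real N / (\<theta> * sin (\<theta> / 2)) * exp (real N * clausen2 \<theta> / \<theta>)"
proof -
  define h where "h = \<theta> / real N"
  have h_pos: "0 < h" and Nh: "real N * h = \<theta>"
    using assms by (simp_all add: h_def)
  have "h \<le> \<theta> / 2"
    using assms unfolding h_def by (intro divide_left_mono) auto
  then have h_less_pi: "h < pi"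
    using assms by linarith
  have "(\<Prod>j=1..N. inverse (cmod (exp (\<i> * complex_of_real (real j * \<theta> / real N)) - 1)))
      = exp (\<Sum>j=1..N. clausen1 (real j * h))"
    using prod_inverse_norm_exp_i_minus_one[OF h_pos] assms(3) by (simp add: Nh h_def)
  also have "\<dots> < exp (ln 2 - ln h - ln (sin (\<theta> / 2)) + clausen2 \<theta> / h)"
  proof -
    have "(\<Sum>j=1..N. clausen1 (real j * h)) \<le> clausen2 \<theta> / h + (ln h - 1) / 2 + clausen1 \<theta>"
      using sum_clausen1_le[of N h] assms h_pos Nh by simp
    moreover have "clausen1 \<theta> = - ln 2 - ln (sin (\<theta> / 2))"
      using sin_half_pos[OF assms(2,3)] by (simp add: clausen1_def ln_mult)
    ultimately show ?thesis
      using three_ln_less_five_ln2[OF h_pos h_less_pi] ln_2_less_1 by (simp only: exp_less_cancel_iff) argo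
  qed
  also have "\<dots> = 2 * real N / (\<theta> * sin (\<theta> / 2)) * exp (real N * clausen2 \<theta> / \<theta>)"
    using h_pos sin_half_pos[OF assms(2,3)]
    by (simp add: exp_add exp_diff h_def field_simps)
  finally show ?thesis .
qed

end
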